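(* Let $\Gamma=\{f_1,\dots,f_n\}$ be a family of weak weight-functions such that $\mathsf{BGM}_\Gamma$ is shift-invariant. Then $\mathsf{BGM}_\Gamma$ is a pre-aggregation function which is $(k,\dots,k)$-increasing for every $k>0$.
   Context: A family of weak weight-functions (wFWF) is a family $\Gamma=\{f_i:[0,1]^n\to[0,1]\mid 1\le i\le n\}$ such that (I) $\sum_{i=1}^n f_i(\mathbf{x})\le 1$ for all $\mathbf{x}\in[0,1]^n$ and (II) $\sum_{i=1}^n f_i(1,\dots,1)=1$. The bounded generalized mixture function is $\mathsf{BGM}_\Gamma(\mathbf{x})=\sum_{i=1}^n f_i(\mathbf{x})\,x_i$. A function $F:[0,1]^n\to[0,1]$ is shift-invariant if $F(x_1+r,\dots,x_n+r)=F(\mathbf{x})+r$ whenever $r\in[-1,1]$, $(x_1+r,\dots,x_n+r)\in[0,1]^n$ and $F(\mathbf{x})+r\in[0,1]$. For a nonzero $\mathbf{r}\in\mathbb{R}^n$, $F$ is $\mathbf{r}$-increasing if $F(\mathbf{x})\le F(x_1+tr_1,\dots,x_n+tr_n)$ for all $\mathbf{x}\in[0,1]^n$ and $t>0$ with $(x_1+tr_1,\dots,x_n+tr_n)\in[0,1]^n$. $F$ is a pre-aggregation function if $F(0,\dots,0)=0$, $F(1,\dots,1)=1$ and $F$ is $\mathbf{r}$-increasing for some nonzero $\mathbf{r}\in[0,1]^n$. *)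

theory Defs
  imports "HOL-Analysis.Analysis"
begin

definition unit_cube :: "(real ^ 'n) set" where
  "unit_cube = {x. \<forall>i. 0 \<le> x $ i \<and> x $ i \<le> 1}"

definition wFWF :: "('n::finite \<Rightarrow> real ^ 'n \<Rightarrow> real) \<Rightarrow> bool" where
  "wFWF f \<longleftrightarrow>
     (\<forall>i. \<forall>x\<in>unit_cube. 0 \<le> f i x \<and> f i x \<le> 1) \<and>
     (\<forall>x\<in>unit_cube. (\<Sum>i\<in>UNIV. f i x) \<le> 1) \<and>
     (\<Sum>i\<in>UNIV. f i (\<chi> j. 1)) = 1"

definition BGM :: "('n::finite \<Rightarrow> real ^ 'n \<Rightarrow> real) \<Rightarrow> real ^ 'n \<Rightarrow> real" where
  "BGM f x = (\<Sum>i\<in>UNIV. f i x * x $ i)"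

definition shift_invariant :: "(real ^ 'n \<Rightarrow> real) \<Rightarrow> bool" where
  "shift_invariant F \<longleftrightarrow>
     (\<forall>x\<in>unit_cube. \<forall>r::real. -1 \<le> r \<and> r \<le> 1 \<and>
        (\<chi> i. x $ i + r) \<in> unit_cube \<and> 0 \<le> F x + r \<and> F x + r \<le> 1
        \<longrightarrow> F (\<chi> i. x $ i + r) = F x + r)"

definition r_increasing :: "real ^ 'n \<Rightarrow> (real ^ 'n \<Rightarrow> real) \<Rightarrow> bool" where
  "r_increasing r F \<longleftrightarrow> r \<noteq> 0 \<and>
     (\<forall>x\<in>unit_cube. \<forall>t::real. t > 0 \<and> x + t *\<^sub>R r \<in> unit_cube
        \<longrightarrow> F x \<le> F (x + t *\<^sub>R r))"

definition pre_aggregation :: "(real ^ 'n \<Rightarrow> real) \<Rightarrow> bool" where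
  "pre_aggregation F \<longleftrightarrow>
     F 0 = 0 \<and> F (\<chi> i. 1) = 1 \<and>
     (\<exists>r\<in>unit_cube. r_increasing r F)"

end

theory Submission
  imports Defs
begin

text \<open>If a shift-invariant F satisfies 0 \<le> F x \<le> max_i x_i on the cube, then
  whenever x + (r,...,r) stays in the cube so does the value F x + r, hence shift invariance
  gives F (x + (r,...,r)) = F x + r \<ge> F x for r > 0.  A bounded generalized mixture
  function has such values because its weights are nonnegative with sum at most 1.\<close>

lemma BGM_nonneg:
  assumes "wFWF f" and "x \<in> unit_cube"
  shows "0 \<le> BGM f x"
  using assms unfolding BGM_def wFWF_def unit_cube_def
  by (intro sum_nonneg) simp

lemma BGM_le_coordinate_bound:
  assumes "wFWF f" and x: "x \<in> unit_cube" and bound: "\<And>i. x $ i \<le> c"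
  shows "BGM f x \<le> c"
proof -
  have weights_nonneg: "\<And>i. 0 \<le> f i x" and weights_sum: "(\<Sum>i\<in>UNIV. f i x) \<le> 1"
    using assms(1) x by (auto simp: wFWF_def)
  have "0 \<le> c"
    using x bound[of undefined] by (auto simp: unit_cube_def intro: order_trans)
  have "BGM f x \<le> (\<Sum>i\<in>UNIV. f i x * c)"
    unfolding BGM_def using weights_nonneg bound by (intro sum_mono mult_left_mono)
  also have "\<dots> = (\<Sum>i\<in>UNIV. f i x) * c"
    by (simp add: sum_distrib_right)
  also have "\<dots> \<le> c"
    using mult_right_mono[OF weights_sum \<open>0 \<le> c\<close>] by simp
  finally show ?thesis .
qed

lemma BGM_zero: "BGM f 0 = 0"
  by (simp add: BGM_def)

lemma BGM_one:
  assumes "wFWF f"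
  shows "BGM f (\<chi> i. 1) = 1"
  using assms by (simp add: BGM_def wFWF_def)

lemma shift_invariant_diagonal_increasing:
  fixes F :: "real ^ 'n::finite \<Rightarrow> real"
  assumes shift: "shift_invariant F"
    and nonneg: "\<And>x. x \<in> unit_cube \<Longrightarrow> 0 \<le> F x"
    and bounded: "\<And>x c. x \<in> unit_cube \<Longrightarrow> (\<And>i. x $ i \<le> c) \<Longrightarrow> F x \<le> c"
    and "k > 0"
  shows "r_increasing (\<chi> i. k) F"
  unfolding r_increasing_def
proof (intro conjI ballI allI impI)
  show "(\<chi> i. k) \<noteq> (0 :: real ^ 'n)"
    using \<open>k > 0\<close> by (auto simp: vec_eq_iff)
next
  fix x :: "real ^ 'n" and t :: real
  assume x: "x \<in> unit_cube" and t: "0 < t \<and> x + t *\<^sub>R (\<chi> i. k) \<in> unit_cube"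
  define r where "r = t * k"
  have "r > 0"
    using t \<open>k > 0\<close> by (simp add: r_def)
  have shifted: "x + t *\<^sub>R (\<chi> i. k) = (\<chi> i. x $ i + r)"
    by (simp add: vec_eq_iff r_def)
  have coords: "\<And>i. 0 \<le> x $ i \<and> x $ i + r \<le> 1"
    using x t by (auto simp: unit_cube_def shifted)
  have "r \<le> 1"
    using coords[of undefined] by linarith
  have "F x + r \<le> 1"
    using bounded[OF x, of "1 - r"] coords by (simp add: algebra_simps)
  then have "F (\<chi> i. x $ i + r) = F x + r"
    using shift x t nonneg[OF x] \<open>r > 0\<close> \<open>r \<le> 1\<close>
    unfolding shift_invariant_def shifted by simp
  then show "F x \<le> F (x + t *\<^sub>R (\<chi> i. k))"
    using shifted \<open>r > 0\<close> by simp
qed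

theorem proposition9:
  fixes f :: "'n::finite \<Rightarrow> real ^ 'n \<Rightarrow> real"
  assumes "wFWF f"
    and "shift_invariant (BGM f)"
  shows "pre_aggregation (BGM f) \<and>
         (\<forall>k::real. k > 0 \<longrightarrow> r_increasing (\<chi> i. k) (BGM f))"
proof -
  have increasing: "\<forall>k::real. k > 0 \<longrightarrow> r_increasing (\<chi> i. k) (BGM f)"
    using shift_invariant_diagonal_increasing[OF assms(2)]
      BGM_nonneg[OF assms(1)] BGM_le_coordinate_bound[OF assms(1)] by blast
  have "(\<chi> i. 1) \<in> (unit_cube :: (real ^ 'n) set)"
    by (simp add: unit_cube_def)
  then have "pre_aggregation (BGM f)"
    using increasing BGM_zero BGM_one[OF assms(1)] zero_less_one
    unfolding pre_aggregation_def by blast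
  with increasing show ?thesis by blast
qed

end
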